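(* Let $X$ be a finite set and let $g_1,\ldots,g_k$ be closure operators on $X$. Then the map $f:2^X\to 2^X$ defined by $f(A)=\bigcap_{i=1}^k g_i(A)$ is a closure operator (we say $f$ is generated from $g_1,\ldots,g_k$). Moreover, if $f,g_1,\ldots,g_k$ are closure operators on $X$, then $f$ is generated from $g_1,\ldots,g_k$ (i.e. $f(A)=\bigcap_{i=1}^k g_i(A)$ for all $A\subseteq X$) if and only if both of the following hold: (i) $S(g_i)\subseteq S(f)$ for all $i\in\{1,\ldots,k\}$; (ii) whenever $A\in S(f)$ and $x\in X\setminus A$, there exists $i\in\{1,\ldots,k\}$ such that $x\notin g_i(A)$.
   Context: A closure operator on $X$ is a map $f:2^X\to 2^X$ such that $A\subseteq f(A)$ for all $A$, $f(\emptyset)=\emptyset$, $f(f(A))=f(A)$, and $A\subseteq B$ implies $f(A)\subseteq f(B)$. $S(f)=\{A\subseteq X: f(A)=A\}$ is the set of closed sets of $f$. *)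

theory Defs
  imports Main
begin

text \<open>A closure operator on the ground set X: a map on the subsets of X
(values on non-subsets of X are irrelevant).\<close>
definition closure_op :: "'a set \<Rightarrow> ('a set \<Rightarrow> 'a set) \<Rightarrow> bool" where
  "closure_op X f \<longleftrightarrow>
     (\<forall>A. A \<subseteq> X \<longrightarrow> f A \<subseteq> X) \<and>
     (\<forall>A. A \<subseteq> X \<longrightarrow> A \<subseteq> f A) \<and>
     f {} = {} \<and>
     (\<forall>A. A \<subseteq> X \<longrightarrow> f (f A) = f A) \<and>
     (\<forall>A B. A \<subseteq> B \<and> B \<subseteq> X \<longrightarrow> f A \<subseteq> f B)"

definition closed_sets :: "'a set \<Rightarrow> ('a set \<Rightarrow> 'a set) \<Rightarrow> 'a set set" where
  "closed_sets X f = {A. A \<subseteq> X \<and> f A = A}"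

end

theory Submission
  imports Defs
begin

text \<open>Each closure g_i A is the least g_i-closed superset of A, and an intersection of closure
operators inherits extensivity, monotonicity and idempotence from its factors. If every g_i-closed
set is f-closed, then f A lies below every g_i A; conversely, a point of \<Inter>_i g_i A outside the
f-closed set f A would, by the separation condition, miss some g_i (f A) \<supseteq> g_i A.\<close>

lemma
  assumes "closure_op X f"
  shows closure_op_subset: "A \<subseteq> X \<Longrightarrow> f A \<subseteq> X"
    and closure_op_extensive: "A \<subseteq> X \<Longrightarrow> A \<subseteq> f A"
    and closure_op_empty: "f {} = {}"
    and closure_op_idem: "A \<subseteq> X \<Longrightarrow> f (f A) = f A"
    and closure_op_mono: "A \<subseteq> B \<Longrightarrow> B \<subseteq> X \<Longrightarrow> f A \<subseteq> f B"
  using assms unfolding closure_op_def by simp_all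

lemma closure_op_in_closed_sets:
  assumes "closure_op X f" and "A \<subseteq> X"
  shows "f A \<in> closed_sets X f"
  using closure_op_subset[OF assms] closure_op_idem[OF assms] unfolding closed_sets_def by simp

lemma closure_op_least:
  assumes "closure_op X f" and "B \<in> closed_sets X f" and "A \<subseteq> B"
  shows "f A \<subseteq> B"
proof -
  from \<open>B \<in> closed_sets X f\<close> have "B \<subseteq> X" and "f B = B" unfolding closed_sets_def by auto
  with closure_op_mono[OF assms(1) \<open>A \<subseteq> B\<close>] show ?thesis by simp
qed

lemma closure_op_INT:
  assumes "I \<noteq> {}" and "\<forall>i\<in>I. closure_op X (g i)"
  shows "closure_op X (\<lambda>A. \<Inter>i\<in>I. g i A)"
proof -
  from assms(2) have g: "\<And>i. i \<in> I \<Longrightarrow> closure_op X (g i)" by blast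
  from \<open>I \<noteq> {}\<close> obtain j where j: "j \<in> I" by blast
  have subset: "(\<Inter>i\<in>I. g i A) \<subseteq> X" if "A \<subseteq> X" for A
    using INT_lower[OF j] closure_op_subset[OF g[OF j] that] by (rule subset_trans)
  have extensive: "A \<subseteq> (\<Inter>i\<in>I. g i A)" if "A \<subseteq> X" for A
    using closure_op_extensive[OF g that] by (rule INT_greatest)
  have mono: "(\<Inter>i\<in>I. g i A) \<subseteq> (\<Inter>i\<in>I. g i B)" if "A \<subseteq> B" "B \<subseteq> X" for A B
    using closure_op_mono[OF g that] by (rule INT_anti_mono[OF order_refl])
  have idem: "(\<Inter>i\<in>I. g i (\<Inter>i\<in>I. g i A)) = (\<Inter>i\<in>I. g i A)" if A: "A \<subseteq> X" for A
  proof (rule subset_antisym[OF INT_greatest extensive[OF subset[OF A]]])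
    fix i assume i: "i \<in> I"
    have "(\<Inter>i\<in>I. g i (\<Inter>i\<in>I. g i A)) \<subseteq> g i (\<Inter>i\<in>I. g i A)" using i by (rule INT_lower)
    also have "\<dots> \<subseteq> g i (g i A)"
      using closure_op_mono[OF g[OF i] INT_lower[OF i, of "\<lambda>i. g i A"] closure_op_subset[OF g[OF i] A]] .
    also have "\<dots> = g i A" using closure_op_idem[OF g[OF i] A] .
    finally show "(\<Inter>i\<in>I. g i (\<Inter>i\<in>I. g i A)) \<subseteq> g i A" .
  qed
  have empty: "(\<Inter>i\<in>I. g i {}) = {}"
    using INT_lower[OF j, of "\<lambda>i. g i {}"] closure_op_empty[OF g[OF j]] by simp
  show ?thesis
    unfolding closure_op_def using subset extensive empty idem mono by simp
qed

lemma closed_sets_subset_if_eq_INT: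
  assumes f: "closure_op X f" and eq: "\<forall>A. A \<subseteq> X \<longrightarrow> f A = (\<Inter>i\<in>I. g i A)" and i: "i \<in> I"
  shows "closed_sets X (g i) \<subseteq> closed_sets X f"
proof
  fix A assume "A \<in> closed_sets X (g i)"
  then have A: "A \<subseteq> X" and "g i A = A" unfolding closed_sets_def by auto
  with eq i have "f A \<subseteq> A" by blast
  with closure_op_extensive[OF f A] A show "A \<in> closed_sets X f"
    unfolding closed_sets_def by blast
qed

lemma eq_INT_if_closed_sets_subset:
  assumes "I \<noteq> {}" and f: "closure_op X f" and "\<forall>i\<in>I. closure_op X (g i)"
    and closed: "\<forall>i\<in>I. closed_sets X (g i) \<subseteq> closed_sets X f"
    and separating: "\<forall>A\<in>closed_sets X f. \<forall>x\<in>X - A. \<exists>i\<in>I. x \<notin> g i A"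
    and A: "A \<subseteq> X"
  shows "f A = (\<Inter>i\<in>I. g i A)"
proof
  from assms(3) have g: "\<And>i. i \<in> I \<Longrightarrow> closure_op X (g i)" by blast
  show "f A \<subseteq> (\<Inter>i\<in>I. g i A)"
  proof (rule INT_greatest)
    fix i assume i: "i \<in> I"
    have "g i A \<in> closed_sets X f"
      using closed i closure_op_in_closed_sets[OF g[OF i] A] by blast
    then show "f A \<subseteq> g i A" by (rule closure_op_least[OF f _ closure_op_extensive[OF g[OF i] A]])
  qed
  show "(\<Inter>i\<in>I. g i A) \<subseteq> f A"
  proof
    fix x assume x: "x \<in> (\<Inter>i\<in>I. g i A)"
    show "x \<in> f A"
    proof (rule ccontr)
      assume "x \<notin> f A"
      moreover have "x \<in> X"
        using x \<open>I \<noteq> {}\<close> closure_op_subset[OF g A] by blast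
      moreover note closure_op_in_closed_sets[OF f A]
      ultimately obtain i where i: "i \<in> I" and "x \<notin> g i (f A)" using separating by blast
      moreover have "g i A \<subseteq> g i (f A)"
        using closure_op_mono[OF g[OF i] closure_op_extensive[OF f A] closure_op_subset[OF f A]] .
      ultimately show False using x by blast
    qed
  qed
qed

lemma closure_op_eq_INT_iff:
  assumes "I \<noteq> {}" and f: "closure_op X f" and "\<forall>i\<in>I. closure_op X (g i)"
  shows "(\<forall>A. A \<subseteq> X \<longrightarrow> f A = (\<Inter>i\<in>I. g i A)) \<longleftrightarrow>
    (\<forall>i\<in>I. closed_sets X (g i) \<subseteq> closed_sets X f) \<and>
    (\<forall>A\<in>closed_sets X f. \<forall>x\<in>X - A. \<exists>i\<in>I. x \<notin> g i A)"
proof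
  assume eq: "\<forall>A. A \<subseteq> X \<longrightarrow> f A = (\<Inter>i\<in>I. g i A)"
  then have "\<forall>A\<in>closed_sets X f. \<forall>x\<in>X - A. \<exists>i\<in>I. x \<notin> g i A"
    unfolding closed_sets_def by auto
  with closed_sets_subset_if_eq_INT[OF f eq] show "(\<forall>i\<in>I. closed_sets X (g i) \<subseteq> closed_sets X f) \<and>
    (\<forall>A\<in>closed_sets X f. \<forall>x\<in>X - A. \<exists>i\<in>I. x \<notin> g i A)" by blast
qed (use eq_INT_if_closed_sets_subset[OF assms] in blast)

theorem theorem2:
  fixes X :: "'a set" and k :: nat and g :: "nat \<Rightarrow> 'a set \<Rightarrow> 'a set"
  assumes "finite X" and "k \<ge> 1"
    and "\<forall>i\<in>{1..k}. closure_op X (g i)"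
  shows "closure_op X (\<lambda>A. \<Inter>i\<in>{1..k}. g i A)
    \<and> (\<forall>f. closure_op X f \<longrightarrow>
          ((\<forall>A. A \<subseteq> X \<longrightarrow> f A = (\<Inter>i\<in>{1..k}. g i A)) \<longleftrightarrow>
           ((\<forall>i\<in>{1..k}. closed_sets X (g i) \<subseteq> closed_sets X f) \<and>
            (\<forall>A\<in>closed_sets X f. \<forall>x\<in>X - A. \<exists>i\<in>{1..k}. x \<notin> g i A))))"
proof -
  have nonempty: "{1..k} \<noteq> {}" using \<open>k \<ge> 1\<close> by simp
  show ?thesis
    using closure_op_INT[OF nonempty assms(3)] closure_op_eq_INT_iff[OF nonempty _ assms(3)] by blast
qed

end
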